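(* Let $R$ be a commutative ring with identity. Then the cozero-divisor graph $\Gamma'(R)$ is outerplanar if and only if $\Gamma''_I(R)$ is outerplanar for every ideal $I$ of $R$.
   Context: $\Gamma'(R)$ is the simple undirected graph whose vertices are the nonzero non-unit elements of $R$, with distinct vertices $x,y$ adjacent if and only if $x\notin yR$ and $y\notin xR$. For an ideal $I$ of $R$, $\Gamma''_I(R)$ is the simple undirected graph whose vertex set is $\{x\in R\setminus I : xR+I\neq R\}$, with distinct vertices $x,y$ adjacent if and only if $x\notin yR+I$ and $y\notin xR+I$. A graph is outerplanar if it can be drawn in the plane without crossings so that all vertices lie on the unbounded face. *)

theory Defs
  imports "HOL-Analysis.Analysis"
begin

definition is_ideal :: "'a::comm_ring_1 set \<Rightarrow> bool" where
  "is_ideal I \<longleftrightarrow> 0 \<in> I \<and> (\<forall>a\<in>I. \<forall>b\<in>I. a + b \<in> I) \<and> (\<forall>a\<in>I. - a \<in> I)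
     \<and> (\<forall>a\<in>I. \<forall>r. r * a \<in> I)"

definition principal :: "'a::comm_ring_1 \<Rightarrow> 'a set" where
  "principal x = range (\<lambda>r. x * r)"

definition principal_plus :: "'a::comm_ring_1 \<Rightarrow> 'a set \<Rightarrow> 'a set" where
  "principal_plus x I = {a + b | a b. a \<in> principal x \<and> b \<in> I}"

definition cozero_V :: "'a::comm_ring_1 set" where
  "cozero_V = {x. x \<noteq> 0 \<and> \<not> x dvd 1}"

definition cozero_E :: "'a::comm_ring_1 \<Rightarrow> 'a \<Rightarrow> bool" where
  "cozero_E x y \<longleftrightarrow> x \<noteq> y \<and> x \<notin> principal y \<and> y \<notin> principal x"

definition cozero_I_V :: "'a::comm_ring_1 set \<Rightarrow> 'a set" where
  "cozero_I_V I = {x. x \<notin> I \<and> principal_plus x I \<noteq> UNIV}"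

definition cozero_I_E :: "'a::comm_ring_1 set \<Rightarrow> 'a \<Rightarrow> 'a \<Rightarrow> bool" where
  "cozero_I_E I x y \<longleftrightarrow> x \<noteq> y \<and> x \<notin> principal_plus y I \<and> y \<notin> principal_plus x I"

text \<open>Outerplanarity of the simple graph with vertex set V and (symmetric, irreflexive)
  adjacency E, via drawings in the plane (identified with the complex numbers):
  vertices are distinct points, each edge is an arc joining its end points, which meets
  the vertex points only in its end points, distinct edges meet only in common end points,
  and every vertex lies on the boundary of the unbounded face (the outside of the drawing).\<close>
definition outerplanar :: "'v set \<Rightarrow> ('v \<Rightarrow> 'v \<Rightarrow> bool) \<Rightarrow> bool" where
  "outerplanar V E \<longleftrightarrow>
    (\<exists>(p :: 'v \<Rightarrow> complex) (\<gamma> :: 'v \<Rightarrow> 'v \<Rightarrow> real \<Rightarrow> complex).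
       inj_on p V \<and>
       (\<forall>u\<in>V. \<forall>v\<in>V. E u v \<longrightarrow>
          arc (\<gamma> u v) \<and> pathstart (\<gamma> u v) = p u \<and> pathfinish (\<gamma> u v) = p v \<and>
          path_image (\<gamma> v u) = path_image (\<gamma> u v) \<and>
          path_image (\<gamma> u v) \<inter> p ` V = {p u, p v}) \<and>
       (\<forall>u\<in>V. \<forall>v\<in>V. \<forall>x\<in>V. \<forall>y\<in>V. E u v \<longrightarrow> E x y \<longrightarrow> {u, v} \<noteq> {x, y} \<longrightarrow>
          path_image (\<gamma> u v) \<inter> path_image (\<gamma> x y) \<subseteq> p ` ({u, v} \<inter> {x, y})) \<and>
       (let D = p ` V \<union> (\<Union>u\<in>V. \<Union>v\<in>{v\<in>V. E u v}. path_image (\<gamma> u v))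
        in \<forall>v\<in>V. p v \<in> closure (outside D)))"

end

theory Submission
  imports Defs
begin

text \<open>Every \<open>\<Gamma>''\<^sub>I(R)\<close> is a subgraph of \<open>\<Gamma>'(R)\<close>, since \<open>xR \<subseteq> xR + I\<close> and a unit \<open>x\<close> has
  \<open>xR + I = R\<close>; and \<open>\<Gamma>''\<^sub>0(R) = \<Gamma>'(R)\<close>. As outerplanarity passes to subgraphs (restrict the
  drawing: removing vertices and edges only enlarges the outside), both directions follow.\<close>

lemma outerplanar_subgraph:
  assumes "outerplanar V E" and sub: "V' \<subseteq> V"
    and sub_edge: "\<And>u v. u \<in> V' \<Longrightarrow> v \<in> V' \<Longrightarrow> E' u v \<Longrightarrow> E u v"
  shows "outerplanar V' E'"
proof -
  obtain p :: "_ \<Rightarrow> complex" and \<gamma> where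
    inj: "inj_on p V" and
    edge: "\<forall>u\<in>V. \<forall>v\<in>V. E u v \<longrightarrow>
          arc (\<gamma> u v) \<and> pathstart (\<gamma> u v) = p u \<and> pathfinish (\<gamma> u v) = p v \<and>
          path_image (\<gamma> v u) = path_image (\<gamma> u v) \<and>
          path_image (\<gamma> u v) \<inter> p ` V = {p u, p v}" and
    disjoint: "\<forall>u\<in>V. \<forall>v\<in>V. \<forall>x\<in>V. \<forall>y\<in>V. E u v \<longrightarrow> E x y \<longrightarrow> {u, v} \<noteq> {x, y} \<longrightarrow>
          path_image (\<gamma> u v) \<inter> path_image (\<gamma> x y) \<subseteq> p ` ({u, v} \<inter> {x, y})" and
    outer: "\<forall>v\<in>V. p v \<in> closure (outside (p ` V \<union> (\<Union>u\<in>V. \<Union>v\<in>{v\<in>V. E u v}. path_image (\<gamma> u v))))"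
    using assms(1) unfolding outerplanar_def Let_def by (elim exE conjE) (rule that; assumption)
  have edge': "\<forall>u\<in>V'. \<forall>v\<in>V'. E' u v \<longrightarrow>
          arc (\<gamma> u v) \<and> pathstart (\<gamma> u v) = p u \<and> pathfinish (\<gamma> u v) = p v \<and>
          path_image (\<gamma> v u) = path_image (\<gamma> u v) \<and>
          path_image (\<gamma> u v) \<inter> p ` V' = {p u, p v}"
  proof (intro ballI impI)
    fix u v assume "u \<in> V'" "v \<in> V'" "E' u v"
    then have "u \<in> V" "v \<in> V" "E u v" using sub sub_edge by auto
    with edge have uv: "arc (\<gamma> u v) \<and> pathstart (\<gamma> u v) = p u \<and> pathfinish (\<gamma> u v) = p v \<and>
          path_image (\<gamma> v u) = path_image (\<gamma> u v) \<and>
          path_image (\<gamma> u v) \<inter> p ` V = {p u, p v}" by blast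
    then have "p u \<in> path_image (\<gamma> u v)" "p v \<in> path_image (\<gamma> u v)"
      using pathstart_in_path_image pathfinish_in_path_image by metis+
    with uv \<open>u \<in> V'\<close> \<open>v \<in> V'\<close> sub show "arc (\<gamma> u v) \<and> pathstart (\<gamma> u v) = p u \<and> pathfinish (\<gamma> u v) = p v \<and>
          path_image (\<gamma> v u) = path_image (\<gamma> u v) \<and>
          path_image (\<gamma> u v) \<inter> p ` V' = {p u, p v}" by blast
  qed
  have disjoint': "\<forall>u\<in>V'. \<forall>v\<in>V'. \<forall>x\<in>V'. \<forall>y\<in>V'. E' u v \<longrightarrow> E' x y \<longrightarrow> {u, v} \<noteq> {x, y} \<longrightarrow>
          path_image (\<gamma> u v) \<inter> path_image (\<gamma> x y) \<subseteq> p ` ({u, v} \<inter> {x, y})"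
    using disjoint sub sub_edge by blast
  have "p ` V' \<union> (\<Union>u\<in>V'. \<Union>v\<in>{v\<in>V'. E' u v}. path_image (\<gamma> u v))
       \<subseteq> p ` V \<union> (\<Union>u\<in>V. \<Union>v\<in>{v\<in>V. E u v}. path_image (\<gamma> u v))"
    using sub sub_edge by blast
  then have outer': "\<forall>v\<in>V'. p v \<in> closure (outside (p ` V' \<union> (\<Union>u\<in>V'. \<Union>v\<in>{v\<in>V'. E' u v}. path_image (\<gamma> u v))))"
    using outer sub closure_mono[OF outside_mono] by blast
  show ?thesis
    unfolding outerplanar_def Let_def
    using inj_on_subset[OF inj sub] edge' disjoint' outer'
    by (intro exI[of _ p] exI[of _ \<gamma>] conjI)
qed

lemma is_ideal_zero: "is_ideal {0::'a::comm_ring_1}"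
  unfolding is_ideal_def by simp

lemma principal_eq_UNIV_iff: "principal x = UNIV \<longleftrightarrow> (x::'a::comm_ring_1) dvd 1"
proof
  assume "principal x = UNIV"
  then obtain r where "1 = x * r" unfolding principal_def by (metis UNIV_I imageE)
  then show "x dvd 1" ..
next
  assume "x dvd 1"
  then obtain r where "1 = x * r" ..
  then have "z = x * (r * z)" for z by (metis mult.assoc mult_1)
  then show "principal x = UNIV" unfolding principal_def by blast
qed

lemma principal_subset_principal_plus:
  assumes "0 \<in> I"
  shows "principal x \<subseteq> principal_plus (x::'a::comm_ring_1) I"
  unfolding principal_plus_def using assms by force

lemma principal_plus_zero: "principal_plus x {0} = principal (x::'a::comm_ring_1)"
  unfolding principal_plus_def by auto

lemma cozero_I_V_subset:
  assumes "is_ideal I"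
  shows "cozero_I_V I \<subseteq> (cozero_V :: 'a::comm_ring_1 set)"
proof -
  have "0 \<in> I" using assms unfolding is_ideal_def by blast
  then show ?thesis
    using principal_subset_principal_plus principal_eq_UNIV_iff
    unfolding cozero_I_V_def cozero_V_def by blast
qed

lemma cozero_I_E_imp_cozero_E:
  assumes "is_ideal I" and "cozero_I_E I x y"
  shows "cozero_E (x::'a::comm_ring_1) y"
proof -
  have "0 \<in> I" using assms(1) unfolding is_ideal_def by blast
  then show ?thesis
    using assms(2) principal_subset_principal_plus
    unfolding cozero_I_E_def cozero_E_def by blast
qed

lemma cozero_I_V_zero: "cozero_I_V {0} = (cozero_V :: 'a::comm_ring_1 set)"
  unfolding cozero_I_V_def cozero_V_def principal_plus_zero principal_eq_UNIV_iff by auto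

lemma cozero_I_E_zero: "cozero_I_E {0} = (cozero_E :: 'a::comm_ring_1 \<Rightarrow> _)"
  unfolding cozero_I_E_def cozero_E_def principal_plus_zero by (intro ext) simp

theorem proposition3p12:
  shows "outerplanar (cozero_V :: 'a::comm_ring_1 set) cozero_E \<longleftrightarrow>
         (\<forall>I :: 'a set. is_ideal I \<longrightarrow> outerplanar (cozero_I_V I) (cozero_I_E I))"
proof
  assume "outerplanar (cozero_V :: 'a set) cozero_E"
  then show "\<forall>I :: 'a set. is_ideal I \<longrightarrow> outerplanar (cozero_I_V I) (cozero_I_E I)"
    using outerplanar_subgraph cozero_I_V_subset cozero_I_E_imp_cozero_E by metis
next
  assume "\<forall>I :: 'a set. is_ideal I \<longrightarrow> outerplanar (cozero_I_V I) (cozero_I_E I)"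
  then have "outerplanar (cozero_I_V {0::'a}) (cozero_I_E {0})" using is_ideal_zero by blast
  then show "outerplanar (cozero_V :: 'a set) cozero_E"
    by (simp only: cozero_I_V_zero cozero_I_E_zero)
qed

end
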